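(* Let $\Delta>0$, $\gamma\in\mathbb{R}$, $\lambda>0$, $\nu$ a finite measure with $\nu(\mathbb{R})=\lambda$, and $\varphi$, $M:=\mathcal{F}^{-1}[\varphi^{-1}(-\cdot)]$, $P$ as in the context. Let $K$ be a symmetric kernel with $K\in L^1(\mathbb{R})$ and $\mathrm{supp}\,\mathcal{F}K\subseteq[-1,1]$, and $h_n\to0$. For $k=1,2$ let $g_n^{(k)}\in L^2(\mathbb{R})$ satisfy $\sup_n\sup_x|g_n^{(k)}(x)|<\infty$ and suppose $g^{(k)}:=\lim_{n\to\infty}g_n^{(k)}*K_{h_n}$ exists at every point. Then $g^{(k)}$ is finite everywhere, the limit $$\lim_{n\to\infty}\int\big(g_n^{(1)}*K_{h_n}*M\big)(x)\big(g_n^{(2)}*K_{h_n}*M\big)(x)P(dx)=\int(g^{(1)}*M)(x)(g^{(2)}*M)(x)P(dx)$$ exists, and for $k=1,2$ $$\lim_{n\to\infty}\int\big(g_n^{(k)}*K_{h_n}*M\big)(x)P(dx)=\lim_{n\to\infty}g_n^{(k)}*K_{h_n}(0)=g^{(k)}(0).$$ Furthermore, if $\nu=\nu_d+\nu_{ac}$ with $\nu_d=\sum_{j\in\mathbb{Z}\setminus\{0\}}q_j\delta_j$ ($q_j\ge0$) and $\nu_{ac}$ absolutely continuous, and for $k=1,2$, $\tilde g^{(k)}$ is a bounded function agreeing with $g^{(k)}$ everywhere except on a Lebesgue-null set disjoint from $\mathbb{Z}$, then $$\int(\tilde g^{(1)}*M)(x)(\tilde g^{(2)}*M)(x)P(d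x)=\int(g^{(1)}*M)(x)(g^{(2)}*M)(x)P(dx).$$
   Context: $\mathcal{F}\mu(u)=\int e^{iux}\mu(dx)$. $P:=e^{-\lambda\Delta}\delta_{\gamma\Delta}*\sum_{k\ge0}\nu^{*k}\Delta^k/k!$ (law of $X_\Delta$ for the compound Poisson process with drift $\gamma$ and Lévy measure $\nu$), $\varphi=\mathcal{F}P$, i.e. $\varphi(u)=\exp(\Delta(i\gamma u+\mathcal{F}\nu(u)-\lambda))$, $\varphi^{-1}=1/\varphi$, and $M=\mathcal{F}^{-1}[\varphi^{-1}(-\cdot)]:=e^{\lambda\Delta}\delta_{\gamma\Delta}*\sum_{k\ge0}\bar\nu^{*k}(-\Delta)^k/k!$ with $\bar\nu(A)=\nu(-A)$, $\nu^{*0}=\bar\nu^{*0}=\delta_0$. $K_h=h^{-1}K(\cdot/h)$; $f*\mu(x)=\int f(x-y)\mu(dy)$. *)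

theory Defs
  imports "HOL-Probability.Probability"
begin

fun conv_pow :: "real measure \<Rightarrow> nat \<Rightarrow> real measure" where
  "conv_pow nu 0 = return borel 0"
| "conv_pow nu (Suc k) = convolution nu (conv_pow nu k)"

definition reflect_measure :: "real measure \<Rightarrow> real measure" where
  "reflect_measure nu = distr nu borel uminus"

text \<open>P = exp(-lam Delta) delta_{gamma Delta} * sum_k nu^{*k} Delta^k / k!  (law of X_Delta).\<close>
definition lawP :: "real \<Rightarrow> real \<Rightarrow> real \<Rightarrow> real measure \<Rightarrow> real measure" where
  "lawP Delta gamma lam nu = measure_of UNIV (sets borel)
     (\<lambda>A. \<Sum>k. ennreal (exp (- lam * Delta) * Delta ^ k / fact k)
              * emeasure (conv_pow nu k) {y. gamma * Delta + y \<in> A})"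

text \<open>(f * M)(x) = int f(x - y) M(dy) with the signed measure
  M = exp(lam Delta) delta_{gamma Delta} * sum_k nubar^{*k} (-Delta)^k / k!.\<close>
definition convM :: "real \<Rightarrow> real \<Rightarrow> real \<Rightarrow> real measure \<Rightarrow> (real \<Rightarrow> real) \<Rightarrow> real \<Rightarrow> real" where
  "convM Delta gamma lam nu f x = exp (lam * Delta) *
     (\<Sum>k. (- Delta) ^ k / fact k *
        (\<integral>y. f (x - gamma * Delta - y) \<partial>conv_pow (reflect_measure nu) k))"

definition convfun :: "(real \<Rightarrow> real) \<Rightarrow> (real \<Rightarrow> real) \<Rightarrow> real \<Rightarrow> real" where
  "convfun f g x = (\<integral>y. f (x - y) * g y \<partial>lborel)"

definition Kh :: "(real \<Rightarrow> real) \<Rightarrow> real \<Rightarrow> real \<Rightarrow> real" where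
  "Kh K h x = K (x / h) / h"

definition fourier :: "(real \<Rightarrow> real) \<Rightarrow> real \<Rightarrow> complex" where
  "fourier f u = (\<integral>x. cis (u * x) * complex_of_real (f x) \<partial>lborel)"

end

theory Submission
  imports Defs
begin

text \<open>
  Writing \<open>P = \<Sum>\<^sub>l w\<^sub>l \<cdot> (\<delta>\<^bsub>\<gamma>\<Delta>\<^esub> * \<nu>\<^sup>*\<^sup>l)\<close> with Poisson weights \<open>w\<^sub>l\<close> and expanding \<open>f * M\<close> as a
  series, \<open>\<integral> (f * M) dP\<close> becomes the double series
  \<open>\<Sum>\<^sub>l \<Sum>\<^sub>k \<Delta>\<^sup>l/l! \<cdot> (-\<Delta>)\<^sup>k/k! \<cdot> \<integral> f d\<nu>\<^sup>*\<^sup>(\<^sup>l\<^sup>+\<^sup>k\<^sup>)\<close>; summing along the diagonals \<open>l + k = m\<close> the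
  weights cancel except for \<open>m = 0\<close>, so \<open>\<integral> (f * M) dP = f 0\<close> for every bounded measurable \<open>f\<close>.
  The smoothed functions \<open>g\<^sub>n * K\<^sub>h\<^sub>n\<close> are bounded by \<open>sup |g\<^sub>n| \<cdot> \<parallel>K\<parallel>\<^sub>1\<close>, so their pointwise limits
  are finite and bounded, and dominated convergence (in the series defining \<open>\<cdot> * M\<close> and in the
  integral against the finite measure \<open>P\<close>) gives all limit statements.
  Finally, changing \<open>f\<close> on a Lebesgue null set \<open>N\<close> avoiding \<open>\<int>\<close> changes \<open>f * M\<close> only on a
  \<open>P\<close>-null set, because every \<open>\<nu>\<^sup>*\<^sup>m\<close> gives mass zero to such sets: the absolutely continuous part
  of \<open>\<nu>\<close> does not see Lebesgue null sets, and the atoms of \<open>\<nu>\<close> lie on \<open>\<int>\<close>, so they only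
  move \<open>N\<close> to translates that again avoid \<open>\<int>\<close>.
\<close>

section \<open>Convolutions of finite measures on the real line\<close>

lemma sets_conv_pow [simp, measurable_cong]: "sets (conv_pow mu k) = sets borel"
  by (cases k) simp_all

lemma space_conv_pow [simp]: "space (conv_pow mu k) = UNIV"
  using sets_eq_imp_space_eq[OF sets_conv_pow] by simp

lemma finite_measure_conv_pow:
  assumes "finite_measure mu" "sets mu = sets borel"
  shows "finite_measure (conv_pow mu k)"
proof (induction k)
  case 0
  show ?case by (simp add: prob_space.finite_measure prob_space_return)
next
  case (Suc k)
  then show ?case using assms by (simp add: convolution_finite)
qed

lemma emeasure_conv_pow_UNIV:
  assumes "finite_measure mu" "sets mu = sets borel"
  shows "emeasure (conv_pow mu k) UNIV = emeasure mu UNIV ^ k"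
proof (induction k)
  case 0
  show ?case by simp
next
  case (Suc k)
  have "space mu = UNIV" using sets_eq_imp_space_eq[OF assms(2)] by simp
  then show ?case
    using Suc assms finite_measure_conv_pow[OF assms, of k]
    by (simp add: convolution_emeasure mult.commute)
qed

lemma convolution_return_0:
  fixes N :: "real measure"
  assumes "finite_measure N" "sets N = sets borel"
  shows "convolution (return borel 0) N = N"
proof (rule measure_eqI)
  interpret N: finite_measure N by fact
  fix A assume "A \<in> sets (convolution (return borel 0) N)"
  then have A: "A \<in> sets borel" by simp
  have "emeasure (convolution (return borel 0) N) A
      = (\<integral>\<^sup>+x. \<integral>\<^sup>+y. indicator A (x + y) \<partial>N \<partial>return borel 0)"
    using A assms sets_eq_imp_space_eq[OF assms(2)]
    by (subst convolution_emeasure')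
       (auto simp: prob_space.finite_measure prob_space_return)
  also have "\<dots> = emeasure N A"
    using A assms(2)
    by (subst nn_integral_return) (auto intro!: N.borel_measurable_nn_integral simp: measurable_split_conv)
  finally show "emeasure (convolution (return borel 0) N) A = emeasure N A" .
qed (use assms in simp)

lemma conv_pow_add:
  assumes "finite_measure mu" "sets mu = sets borel"
  shows "convolution (conv_pow mu l) (conv_pow mu k) = conv_pow mu (l + k)"
proof (induction l)
  case 0
  show ?case using finite_measure_conv_pow[OF assms] by (simp add: convolution_return_0)
next
  case (Suc l)
  then show ?case
    using assms finite_measure_conv_pow[OF assms] by (simp add: convolution_associative[symmetric])
qed

lemma convolution_distr_uminus:
  fixes M N :: "real measure"
  assumes "finite_measure M" "sets M = sets borel" "finite_measure N" "sets N = sets borel"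
  shows "convolution (distr M borel uminus) (distr N borel uminus) = distr (convolution M N) borel uminus"
proof -
  interpret N: finite_measure N by fact
  have [measurable_cong]: "sets M = sets borel" "sets N = sets borel" by fact+
  have "sigma_finite_measure (distr N borel uminus)"
    by (intro finite_measure.sigma_finite_measure finite_measure.finite_measure_distr[OF assms(3)]) simp
  then have "distr M borel uminus \<Otimes>\<^sub>M distr N borel uminus
      = distr (M \<Otimes>\<^sub>M N) (borel \<Otimes>\<^sub>M borel) (\<lambda>(x, y). (- x, - y))"
    by (intro pair_measure_distr) simp_all
  then show ?thesis
    unfolding convolution_def by (simp add: distr_distr case_prod_beta' o_def add.commute)
qed

lemma conv_pow_reflect_measure:
  assumes "finite_measure mu" "sets mu = sets borel"
  shows "conv_pow (reflect_measure mu) k = distr (conv_pow mu k) borel uminus"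
proof (induction k)
  case 0
  show ?case by (simp add: distr_return)
next
  case (Suc k)
  then show ?case
    unfolding reflect_measure_def
    using assms finite_measure_conv_pow[OF assms, of k] by (simp add: convolution_distr_uminus)
qed

lemma integral_convolution:
  fixes f :: "real \<Rightarrow> real"
  assumes "finite_measure M" "sets M = sets borel" "finite_measure N" "sets N = sets borel"
    and f: "f \<in> borel_measurable borel" and B: "\<And>x. \<bar>f x\<bar> \<le> B"
  shows "(\<integral>x. f x \<partial>convolution M N) = (\<integral>x. \<integral>y. f (x + y) \<partial>N \<partial>M)"
proof -
  interpret M: finite_measure M by fact
  interpret N: finite_measure N by fact
  interpret pair_sigma_finite M N ..
  have [measurable_cong]: "sets M = sets borel" "sets N = sets borel" by fact+
  have "integrable (M \<Otimes>\<^sub>M N) (\<lambda>(x, y). f (x + y))"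
    using B f by (intro finite_measure.integrable_const_bound[where B=B]
        finite_measure_pair_measure assms(1,3)) auto
  then show ?thesis
    unfolding convolution_def using f by (simp add: integral_distr integral_fst'[symmetric] case_prod_beta')
qed

lemma measurable_translate_indicator:
  assumes "sets L = sets borel" "sets M = sets borel" and [measurable]: "N \<in> sets (borel :: real measure)"
  shows "(\<lambda>(x, y). indicator N (x + y) :: ennreal) \<in> borel_measurable (L \<Otimes>\<^sub>M M)"
proof -
  have sets_pair: "sets (L \<Otimes>\<^sub>M M) = sets (borel \<Otimes>\<^sub>M borel)"
    using assms by (intro sets_pair_measure_cong) simp_all
  show ?thesis
    unfolding measurable_cong_sets[OF sets_pair refl] by measurable
qed

lemma measurable_translate_indicator_integral:
  fixes M :: "real measure"
  assumes "finite_measure M" "sets M = sets borel" "N \<in> sets borel"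
  shows "(\<lambda>x. \<integral>\<^sup>+y. indicator N (x + y) \<partial>M) \<in> borel_measurable borel"
proof -
  interpret finite_measure M by fact
  show ?thesis
    using measurable_translate_indicator[of borel M N] assms by (intro borel_measurable_nn_integral) simp
qed

lemma AE_lborel_translate_null:
  fixes M :: "real measure"
  assumes M: "finite_measure M" "sets M = sets borel" and N: "N \<in> null_sets lborel"
  shows "AE x in lborel. (\<integral>\<^sup>+y. indicator N (x + y) \<partial>M) = 0"
proof -
  interpret finite_measure M by fact
  interpret pair_sigma_finite lborel M ..
  have N_sets: "N \<in> sets borel" using N by auto
  have "(\<integral>\<^sup>+x. \<integral>\<^sup>+y. indicator N (x + y) \<partial>M \<partial>lborel)
      = (\<integral>\<^sup>+y. \<integral>\<^sup>+x. indicator N (x + y) \<partial>lborel \<partial>M)"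
    by (rule Fubini'[symmetric]) (use measurable_translate_indicator[of lborel M N] M N_sets in simp)
  also have "\<dots> = (\<integral>\<^sup>+y. 0 \<partial>M)"
  proof (rule nn_integral_cong)
    fix y
    have "{x. x + y \<in> N} \<in> null_sets lborel"
      using null_sets_translation[OF N, of "- y"] by simp
    moreover have "(\<lambda>x. indicator N (x + y) :: ennreal) = indicator {x. x + y \<in> N}"
      by (auto simp: indicator_def)
    ultimately show "(\<integral>\<^sup>+x. indicator N (x + y) \<partial>lborel) = 0"
      by (simp add: null_sets_def)
  qed
  finally show ?thesis
    using measurable_translate_indicator_integral[OF M N_sets] by (subst nn_integral_0_iff_AE[symmetric]) auto
qed

section \<open>Series identities\<close>

lemma infsum_UNIV_eq_suminf:
  fixes f :: "nat \<Rightarrow> 'a::{topological_comm_monoid_add, t2_space}"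
  assumes "f summable_on UNIV"
  shows "infsum f UNIV = suminf f"
  using sums_unique[OF has_sum_imp_sums[OF has_sum_infsum[OF assms]]] by simp

lemma suminf_suminf_eq_suminf_diagonal:
  fixes F :: "nat \<Rightarrow> nat \<Rightarrow> 'a::banach"
  assumes F: "(\<lambda>(l, k). F l k) summable_on UNIV"
  shows "(\<Sum>l. \<Sum>k. F l k) = (\<Sum>m. \<Sum>k\<le>m. F (m - k) k)"
proof -
  have F': "(\<lambda>(l, k). F l k) summable_on Sigma UNIV (\<lambda>_. UNIV)" using F by simp
  have diag: "bij_betw (\<lambda>(m, k). (m - k, k)) (Sigma UNIV (\<lambda>m::nat. {..m})) (UNIV \<times> UNIV)"
    by (rule bij_betw_byWitness[where f'="\<lambda>(l, k). (l + k, k)"]) auto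
  have F_diag: "(\<lambda>(m, k). F (m - k) k) summable_on Sigma UNIV (\<lambda>m. {..m})"
    using summable_on_reindex_bij_betw[OF diag, of "\<lambda>(l, k). F l k"] F by (simp add: case_prod_beta')
  have row: "F l summable_on UNIV" for l
  proof -
    have "(\<lambda>(l, k). F l k) summable_on Pair l ` UNIV"
      by (rule summable_on_subset_banach[OF F]) auto
    then show ?thesis by (subst (asm) summable_on_reindex) (auto simp: o_def inj_on_def)
  qed
  have "(\<Sum>l. \<Sum>k. F l k) = infsum (\<lambda>l. infsum (F l) UNIV) UNIV"
    using row summable_on_Sigma_banach[OF F']
    by (simp add: infsum_UNIV_eq_suminf)
  also have "\<dots> = infsum (\<lambda>(l, k). F l k) UNIV"
    using infsum_Sigma'_banach[OF F'] by simp
  also have "\<dots> = infsum (\<lambda>(m, k). F (m - k) k) (Sigma UNIV (\<lambda>m. {..m}))"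
    using infsum_reindex_bij_betw[OF diag, of "\<lambda>(l, k). F l k"] by (simp add: case_prod_beta')
  also have "\<dots> = infsum (\<lambda>m. \<Sum>k\<le>m. F (m - k) k) UNIV"
    using infsum_Sigma'_banach[OF F_diag] by simp
  also have "\<dots> = (\<Sum>m. \<Sum>k\<le>m. F (m - k) k)"
    using summable_on_Sigma_banach[OF F_diag] by (simp add: infsum_UNIV_eq_suminf)
  finally show ?thesis .
qed

lemma sum_exp_series_neg_cancel:
  fixes D :: real
  shows "(\<Sum>k\<le>m. D ^ (m - k) / fact (m - k) * ((- D) ^ k / fact k)) = (if m = 0 then 1 else 0)"
  using exp_series_add_commuting[of "- D" D m] by (auto simp: divide_inverse ac_simps power_0_left)

lemma summable_on_mult_nonneg:
  fixes u v :: "nat \<Rightarrow> real"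
  assumes "summable u" "summable v" "\<And>n. u n \<ge> 0" "\<And>n. v n \<ge> 0"
  shows "(\<lambda>(l, k). u l * v k) summable_on UNIV"
proof -
  have "(v has_sum suminf v) UNIV"
    using assms by (simp add: summable_on_UNIV_nonneg_real_iff has_sum_infsum flip: infsum_UNIV_eq_suminf)
  then have "((\<lambda>k. u l * v k) has_sum u l * suminf v) UNIV" for l
    by (rule has_sum_cmult_right)
  moreover have "(\<lambda>l. u l * suminf v) summable_on UNIV"
    using assms by (intro summable_on_cmult_left) (simp add: summable_on_UNIV_nonneg_real_iff)
  ultimately have "(\<lambda>(l, k). u l * v k) summable_on UNIV \<times> UNIV"
    by (intro summable_on_SigmaI[where g="\<lambda>l. u l * suminf v"]) (use assms in auto)
  then show ?thesis by simp
qed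

lemma exp_series_sums: "(\<lambda>k. x ^ k / fact k) sums exp (x :: real)"
  using exp_converges[of x] by (simp add: divide_inverse mult.commute)

lemma summable_exp_series: "summable (\<lambda>k. x ^ k / fact k :: real)"
  using exp_series_sums by (rule sums_summable)

lemma abs_exp_weight_term_le:
  fixes a :: "nat \<Rightarrow> real" and D L B :: real
  assumes D: "D \<ge> 0" and a: "\<And>m. \<bar>a m\<bar> \<le> B * L ^ m"
  shows "\<bar>(- D) ^ k / fact k * a (l + k)\<bar> \<le> B * L ^ l * ((D * L) ^ k / fact k)"
proof -
  have "\<bar>(- D) ^ k / fact k * a (l + k)\<bar> = D ^ k / fact k * \<bar>a (l + k)\<bar>"
    using D by (simp add: abs_mult power_abs)
  also have "\<dots> \<le> D ^ k / fact k * (B * L ^ (l + k))"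
    using D a by (intro mult_left_mono) auto
  finally show ?thesis by (simp add: power_add power_mult_distrib mult_ac)
qed

lemma summable_on_exp_weights_double:
  fixes a :: "nat \<Rightarrow> real" and D L B :: real
  assumes D: "D \<ge> 0" and L: "L \<ge> 0" and a: "\<And>m. \<bar>a m\<bar> \<le> B * L ^ m"
  shows "(\<lambda>(l, k). D ^ l / fact l * ((- D) ^ k / fact k * a (l + k))) summable_on UNIV"
proof -
  define u where "u n = (D * L) ^ n / fact n" for n
  have u_nonneg: "u n \<ge> 0" for n unfolding u_def using D L by simp
  have u_summable: "summable u" unfolding u_def by (rule summable_exp_series)
  have "\<bar>D ^ l / fact l * ((- D) ^ k / fact k * a (l + k))\<bar> \<le> B * (u l * u k)" for l k
  proof -
    have "\<bar>D ^ l / fact l * ((- D) ^ k / fact k * a (l + k))\<bar>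
        = D ^ l / fact l * \<bar>(- D) ^ k / fact k * a (l + k)\<bar>"
      using D by (simp add: abs_mult)
    also have "\<dots> \<le> D ^ l / fact l * (B * L ^ l * ((D * L) ^ k / fact k))"
      using D abs_exp_weight_term_le[OF D a] by (intro mult_left_mono) auto
    finally show ?thesis by (simp add: u_def power_mult_distrib mult_ac)
  qed
  moreover have "(\<lambda>(l, k). B * (u l * u k)) summable_on UNIV"
    using summable_on_cmult_right[OF summable_on_mult_nonneg[OF u_summable u_summable u_nonneg u_nonneg], of B]
    by (simp add: case_prod_unfold)
  ultimately have "(\<lambda>x. norm ((\<lambda>(l, k). D ^ l / fact l * ((- D) ^ k / fact k * a (l + k))) x)) summable_on UNIV"
    by (intro Infinite_Sum.abs_summable_on_comparison_test') auto
  then show ?thesis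
    using summable_on_iff_abs_summable_on_real by blast
qed

text \<open>The Poisson weights with parameters \<open>D\<close> and \<open>-D\<close> cancel each other, as
  \<open>exp D * exp (- D) = 1\<close>; the growth bound on \<open>a\<close> makes the double series absolutely convergent.\<close>
lemma exp_weights_inversion:
  fixes a :: "nat \<Rightarrow> real" and D L B :: real
  assumes D: "D \<ge> 0" and L: "L \<ge> 0" and a: "\<And>m. \<bar>a m\<bar> \<le> B * L ^ m"
  shows "(\<Sum>l. D ^ l / fact l * (\<Sum>k. (- D) ^ k / fact k * a (l + k))) = a 0"
proof -
  define F where "F l k = D ^ l / fact l * ((- D) ^ k / fact k * a (l + k))" for l k
  have row_summable: "summable (\<lambda>k. (- D) ^ k / fact k * a (l + k))" for l
    by (rule summable_comparison_test[OF _ summable_mult[OF summable_exp_series]])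
      (use abs_exp_weight_term_le[OF D a] in auto)
  have "(\<Sum>l. D ^ l / fact l * (\<Sum>k. (- D) ^ k / fact k * a (l + k))) = (\<Sum>l. \<Sum>k. F l k)"
    unfolding F_def suminf_mult[OF row_summable] ..
  also have "\<dots> = (\<Sum>m. \<Sum>k\<le>m. F (m - k) k)"
    using summable_on_exp_weights_double[OF D L a]
    by (intro suminf_suminf_eq_suminf_diagonal) (simp add: F_def)
  also have "\<dots> = (\<Sum>m. if m = 0 then a 0 else 0)"
  proof (rule suminf_cong)
    fix m
    have "(\<Sum>k\<le>m. F (m - k) k) = (\<Sum>k\<le>m. D ^ (m - k) / fact (m - k) * ((- D) ^ k / fact k)) * a m"
      unfolding sum_distrib_right F_def by (intro sum.cong) auto
    then show "(\<Sum>k\<le>m. F (m - k) k) = (if m = 0 then a 0 else 0)"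
      by (simp only: sum_exp_series_neg_cancel) simp
  qed
  also have "\<dots> = a 0"
    using sums_single[of 0 "\<lambda>_. a 0"] by (simp add: sums_iff)
  finally show ?thesis .
qed

section \<open>Countable mixtures of shifted measures\<close>

lemma (in finite_measure) integrable_bounded:
  fixes f :: "'a \<Rightarrow> real"
  assumes "f \<in> borel_measurable M" "\<And>x. \<bar>f x\<bar> \<le> B"
  shows "integrable M f"
  using assms by (intro integrable_const_bound[where B=B]) auto

lemma (in finite_measure) abs_integral_le_bound:
  fixes f :: "'a \<Rightarrow> real"
  assumes "f \<in> borel_measurable M" "\<And>x. \<bar>f x\<bar> \<le> B"
  shows "\<bar>\<integral>x. f x \<partial>M\<bar> \<le> B * measure M (space M)"
proof -
  have "\<bar>\<integral>x. f x \<partial>M\<bar> \<le> (\<integral>x. \<bar>f x\<bar> \<partial>M)"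
    using integral_norm_bound[of M f] by simp
  also have "\<dots> \<le> (\<integral>x. B \<partial>M)"
    using assms integrable_bounded[OF assms] by (intro integral_mono) auto
  finally show ?thesis by (simp add: mult.commute)
qed

lemma suminf_commute_ennreal:
  fixes f :: "nat \<Rightarrow> nat \<Rightarrow> ennreal"
  shows "(\<Sum>i. \<Sum>k. f i k) = (\<Sum>k. \<Sum>i. f i k)"
  using nn_integral_suminf[of "\<lambda>i k. f i k" "count_space UNIV"]
  by (simp add: nn_integral_count_space_nat)

text \<open>The measure \<open>\<Sum>k. c k \<cdot> (\<delta>\<^sub>t * Q k)\<close>; \<open>lawP\<close> is of this form.\<close>
locale shifted_mixture =
  fixes Q :: "nat \<Rightarrow> real measure" and c :: "nat \<Rightarrow> real" and t :: real
  assumes sets_Q: "\<And>k. sets (Q k) = sets borel" and finite_Q: "\<And>k. finite_measure (Q k)"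
    and c_nonneg: "\<And>k. c k \<ge> 0" and summable_mass: "summable (\<lambda>k. c k * measure (Q k) UNIV)"
begin

definition mixture :: "real measure" where
  "mixture = measure_of UNIV (sets borel) (\<lambda>A. \<Sum>k. ennreal (c k) * emeasure (Q k) {y. t + y \<in> A})"

lemma space_Q [simp]: "space (Q k) = UNIV"
  using sets_eq_imp_space_eq[OF sets_Q[of k]] by simp

declare sets_Q [measurable_cong]

lemma sets_Q_translate:
  assumes "A \<in> sets borel"
  shows "{y. t + y \<in> A} \<in> sets (Q k)"
  using measurable_sets_borel[OF _ assms, of "\<lambda>y. t + y"] by (simp add: sets_Q vimage_def)

lemma sets_mixture [simp]: "sets mixture = sets borel"
  unfolding mixture_def by (simp add: sets_measure_of_conv) (metis sets.sigma_sets_eq space_borel)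

lemma space_mixture [simp]: "space mixture = UNIV"
  using sets_eq_imp_space_eq[OF sets_mixture] by simp

lemma measurable_mixture [simp]: "measurable mixture N = measurable borel N"
  by (rule measurable_cong_sets) simp_all

lemma emeasure_mixture:
  assumes "A \<in> sets borel"
  shows "emeasure mixture A = (\<Sum>k. ennreal (c k) * emeasure (Q k) {y. t + y \<in> A})"
  unfolding mixture_def
proof (rule emeasure_measure_of_sigma[OF _ _ _ assms])
  show "sigma_algebra UNIV (sets borel)" by (metis sets.sigma_algebra_axioms space_borel)
  show "positive (sets borel) (\<lambda>A. \<Sum>k. ennreal (c k) * emeasure (Q k) {y. t + y \<in> A})"
    unfolding positive_def by simp
  show "countably_additive (sets borel) (\<lambda>A. \<Sum>k. ennreal (c k) * emeasure (Q k) {y. t + y \<in> A})"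
    unfolding countably_additive_def
  proof (intro allI impI)
    fix A :: "nat \<Rightarrow> real set"
    assume A: "range A \<subseteq> sets borel" and disj: "disjoint_family A"
    have "emeasure (Q k) {y. t + y \<in> \<Union> (range A)} = (\<Sum>i. emeasure (Q k) {y. t + y \<in> A i})" for k
    proof -
      have "{y. t + y \<in> \<Union> (range A)} = (\<Union>i. {y. t + y \<in> A i})" by auto
      moreover have "disjoint_family (\<lambda>i. {y. t + y \<in> A i})"
        using disj by (auto simp: disjoint_family_on_def)
      moreover have "range (\<lambda>i. {y. t + y \<in> A i}) \<subseteq> sets (Q k)"
        using A sets_Q_translate by auto
      ultimately show ?thesis by (simp add: suminf_emeasure)
    qed
    then show "(\<Sum>i. \<Sum>k. ennreal (c k) * emeasure (Q k) {y. t + y \<in> A i})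
        = (\<Sum>k. ennreal (c k) * emeasure (Q k) {y. t + y \<in> \<Union> (range A)})"
      by (simp add: suminf_commute_ennreal[of "\<lambda>i k. ennreal (c k) * _ i k"] ennreal_suminf_cmult)
  qed
qed

lemma nn_integral_mixture:
  assumes "F \<in> borel_measurable borel"
  shows "(\<integral>\<^sup>+x. F x \<partial>mixture) = (\<Sum>k. ennreal (c k) * (\<integral>\<^sup>+y. F (t + y) \<partial>Q k))"
proof -
  have "F \<in> borel_measurable mixture" using assms by simp
  then show ?thesis
  proof (induction rule: borel_measurable_induct)
    case (cong f g)
    then show ?case by (simp cong: nn_integral_cong)
  next
    case (set A)
    then have "A \<in> sets borel" by simp
    moreover have "(\<lambda>y. indicator A (t + y) :: ennreal) = indicator {y. t + y \<in> A}"
      by (auto simp: indicator_def)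
    ultimately show ?case by (simp add: emeasure_mixture sets_Q_translate)
  next
    case (mult u a)
    then have "(\<integral>\<^sup>+x. a * u x \<partial>mixture) = a * (\<Sum>k. ennreal (c k) * (\<integral>\<^sup>+y. u (t + y) \<partial>Q k))"
      by (simp add: nn_integral_cmult)
    also have "\<dots> = (\<Sum>k. ennreal (c k) * (\<integral>\<^sup>+y. a * u (t + y) \<partial>Q k))"
      using mult by (simp add: nn_integral_cmult flip: ennreal_suminf_cmult) (simp add: mult_ac)
    finally show ?case .
  next
    case (add u v)
    then have "(\<integral>\<^sup>+x. v x + u x \<partial>mixture)
        = (\<Sum>k. ennreal (c k) * (\<integral>\<^sup>+y. v (t + y) \<partial>Q k)) + (\<Sum>k. ennreal (c k) * (\<integral>\<^sup>+y. u (t + y) \<partial>Q k))"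
      by (simp add: nn_integral_add)
    also have "\<dots> = (\<Sum>k. ennreal (c k) * (\<integral>\<^sup>+y. v (t + y) + u (t + y) \<partial>Q k))"
      using add by (simp add: nn_integral_add distrib_left flip: suminf_add)
    finally show ?case .
  next
    case (seq U)
    have meas: "(\<lambda>y. U i (t + y)) \<in> borel_measurable (Q k)" for i k
      using seq by simp
    have mono: "incseq (\<lambda>i y. U i (t + y))"
      using \<open>incseq U\<close> by (auto simp: incseq_def le_fun_def)
    have "(\<integral>\<^sup>+x. (SUP i. U i) x \<partial>mixture) = (SUP i. \<integral>\<^sup>+x. U i x \<partial>mixture)"
      unfolding SUP_apply by (rule nn_integral_monotone_convergence_SUP[OF \<open>incseq U\<close>]) (use seq in simp)
    also have "\<dots> = (SUP i. \<Sum>k. ennreal (c k) * (\<integral>\<^sup>+y. U i (t + y) \<partial>Q k))"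
      using seq.IH by simp
    also have "\<dots> = (\<Sum>k. SUP i. ennreal (c k) * (\<integral>\<^sup>+y. U i (t + y) \<partial>Q k))"
      using mono by (intro ennreal_suminf_SUP_eq[symmetric])
        (auto simp: incseq_def le_fun_def intro!: mult_left_mono nn_integral_mono)
    also have "\<dots> = (\<Sum>k. ennreal (c k) * (\<integral>\<^sup>+y. (SUP i. U i) (t + y) \<partial>Q k))"
      by (simp only: SUP_mult_left_ennreal SUP_apply nn_integral_monotone_convergence_SUP[OF mono meas])
    finally show ?case .
  qed
qed

lemma emeasure_mixture_UNIV: "emeasure mixture UNIV = ennreal (\<Sum>k. c k * measure (Q k) UNIV)"
proof -
  have "emeasure mixture UNIV = (\<Sum>k. ennreal (c k * measure (Q k) UNIV))"
    using finite_measure.emeasure_eq_measure[OF finite_Q] c_nonneg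
    by (simp add: emeasure_mixture ennreal_mult)
  also have "\<dots> = ennreal (\<Sum>k. c k * measure (Q k) UNIV)"
    using summable_mass c_nonneg by (intro suminf_ennreal2) auto
  finally show ?thesis .
qed

lemma finite_measure_mixture: "finite_measure mixture"
  by (rule finite_measureI) (simp add: emeasure_mixture_UNIV)

lemma integral_mixture_nonneg:
  assumes F: "F \<in> borel_measurable borel" and B: "\<And>x. \<bar>F x\<bar> \<le> B" and nonneg: "\<And>x. F x \<ge> 0"
  shows "summable (\<lambda>k. c k * (\<integral>y. F (t + y) \<partial>Q k))"
    and "(\<integral>x. F x \<partial>mixture) = (\<Sum>k. c k * (\<integral>y. F (t + y) \<partial>Q k))"
proof -
  have integrable_Q: "integrable (Q k) (\<lambda>y. F (t + y))" for k
    using finite_measure.integrable_bounded[OF finite_Q, where f="\<lambda>y. F (t + y)" and B=B] F B by simp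
  have term_nonneg: "c k * (\<integral>y. F (t + y) \<partial>Q k) \<ge> 0" for k
    using c_nonneg nonneg by simp
  show summable: "summable (\<lambda>k. c k * (\<integral>y. F (t + y) \<partial>Q k))"
  proof (rule summable_comparison_test[OF _ summable_mult[OF summable_mass, of B]])
    have "\<bar>\<integral>y. F (t + y) \<partial>Q k\<bar> \<le> B * measure (Q k) UNIV" for k
      using finite_measure.abs_integral_le_bound[OF finite_Q, where f="\<lambda>y. F (t + y)" and B=B] F B
      by simp
    then have "c k * \<bar>\<integral>y. F (t + y) \<partial>Q k\<bar> \<le> c k * (B * measure (Q k) UNIV)" for k
      using c_nonneg by (intro mult_left_mono)
    then show "\<exists>N. \<forall>k\<ge>N. norm (c k * (\<integral>y. F (t + y) \<partial>Q k)) \<le> B * (c k * measure (Q k) UNIV)"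
      using c_nonneg by (simp add: abs_mult mult.left_commute)
  qed
  have "ennreal (\<integral>x. F x \<partial>mixture) = (\<integral>\<^sup>+x. ennreal (F x) \<partial>mixture)"
    using finite_measure.integrable_bounded[OF finite_measure_mixture, of F B] F B nonneg
    by (simp add: nn_integral_eq_integral)
  also have "\<dots> = (\<Sum>k. ennreal (c k) * (\<integral>\<^sup>+y. ennreal (F (t + y)) \<partial>Q k))"
    using F by (simp add: nn_integral_mixture)
  also have "\<dots> = (\<Sum>k. ennreal (c k * (\<integral>y. F (t + y) \<partial>Q k)))"
    using integrable_Q nonneg c_nonneg by (simp add: nn_integral_eq_integral ennreal_mult)
  also have "\<dots> = ennreal (\<Sum>k. c k * (\<integral>y. F (t + y) \<partial>Q k))"
    using summable term_nonneg by (intro suminf_ennreal2)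
  finally show "(\<integral>x. F x \<partial>mixture) = (\<Sum>k. c k * (\<integral>y. F (t + y) \<partial>Q k))"
    using summable term_nonneg nonneg by (simp add: suminf_nonneg)
qed

lemma integral_mixture:
  assumes F: "F \<in> borel_measurable borel" and B: "\<And>x. \<bar>F x\<bar> \<le> B"
  shows "summable (\<lambda>k. c k * (\<integral>y. F (t + y) \<partial>Q k))"
    and "(\<integral>x. F x \<partial>mixture) = (\<Sum>k. c k * (\<integral>y. F (t + y) \<partial>Q k))"
proof -
  have shifted: "\<bar>F x + B\<bar> \<le> 2 * B" "F x + B \<ge> 0" "\<bar>B\<bar> \<le> B" for x
    using B[of x] by auto
  note up = integral_mixture_nonneg[of "\<lambda>x. F x + B" "2 * B"]
    and const = integral_mixture_nonneg[of "\<lambda>_. B" B]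
  have split: "(\<integral>x. f x \<partial>M) = (\<integral>x. f x + B \<partial>M) - (\<integral>x. B \<partial>M)"
    if "finite_measure M" "f \<in> borel_measurable M" "\<And>x. \<bar>f x\<bar> \<le> B" for M :: "real measure" and f
    using Bochner_Integration.integral_add[OF finite_measure.integrable_bounded[OF that]
        finite_measure.integrable_const[OF that(1)]] by simp
  have split_Q: "c k * (\<integral>y. F (t + y) \<partial>Q k)
      = c k * (\<integral>y. F (t + y) + B \<partial>Q k) - c k * (\<integral>y. B \<partial>Q k)" for k
    using split[OF finite_Q, where f="\<lambda>y. F (t + y)"] F B by (simp add: right_diff_distrib)
  show "summable (\<lambda>k. c k * (\<integral>y. F (t + y) \<partial>Q k))"
    unfolding split_Q using up(1) const(1) F shifted by (intro summable_diff) auto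
  have "(\<integral>x. F x \<partial>mixture) = (\<integral>x. F x + B \<partial>mixture) - (\<integral>x. B \<partial>mixture)"
    using split[OF finite_measure_mixture, of F] F B by simp
  also have "\<dots> = (\<Sum>k. c k * (\<integral>y. F (t + y) + B \<partial>Q k)) - (\<Sum>k. c k * (\<integral>y. B \<partial>Q k))"
    using up(2) const(2) F shifted by simp
  also have "\<dots> = (\<Sum>k. c k * (\<integral>y. F (t + y) \<partial>Q k))"
    unfolding split_Q using up(1) const(1) F shifted by (intro suminf_diff) auto
  finally show "(\<integral>x. F x \<partial>mixture) = (\<Sum>k. c k * (\<integral>y. F (t + y) \<partial>Q k))" .
qed

lemma AE_mixtureI:
  assumes S: "{x. \<not> P x} \<in> sets borel" and AE: "\<And>k. AE y in Q k. P (t + y)"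
  shows "AE x in mixture. P x"
proof -
  have "emeasure (Q k) {y. t + y \<in> {x. \<not> P x}} = 0" for k
    using AE[of k] sets_Q_translate[OF S] by (subst (asm) AE_iff_measurable) auto
  then have "emeasure mixture {x. \<not> P x} = 0"
    using S by (simp add: emeasure_mixture)
  then show ?thesis
    using S by (subst AE_iff_measurable) auto
qed

end

section \<open>The compound Poisson law and its inverse\<close>

locale compound_poisson =
  fixes Delta gamma lam :: real and nu :: "real measure"
  assumes Delta: "Delta > 0" and lam: "lam > 0" and finite_nu: "finite_measure nu"
    and sets_nu: "sets nu = sets borel" and mass_nu: "measure nu UNIV = lam"
begin

abbreviation Q :: "nat \<Rightarrow> real measure" where
  "Q k \<equiv> conv_pow nu k"

definition poisson_weight :: "nat \<Rightarrow> real" where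
  "poisson_weight k = exp (- lam * Delta) * Delta ^ k / fact k"

text \<open>Convolution of \<open>f\<close> with the reflection of \<open>\<nu>\<^sup>*\<^sup>k\<close>; the \<open>k\<close>-th term of \<open>convM\<close>.\<close>
definition conv_Q :: "(real \<Rightarrow> real) \<Rightarrow> nat \<Rightarrow> real \<Rightarrow> real" where
  "conv_Q f k x = (\<integral>y. f (x + y) \<partial>Q k)"

lemma finite_Q: "finite_measure (Q k)"
  using finite_measure_conv_pow[OF finite_nu sets_nu] .

lemma measure_Q_UNIV: "measure (Q k) UNIV = lam ^ k"
proof -
  have "emeasure nu UNIV = ennreal lam"
    using finite_measure.emeasure_eq_measure[OF finite_nu, of UNIV] mass_nu
      sets_eq_imp_space_eq[OF sets_nu] by simp
  then have "emeasure (Q k) UNIV = ennreal (lam ^ k)"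
    using emeasure_conv_pow_UNIV[OF finite_nu sets_nu, of k] lam by (simp add: ennreal_power)
  then show ?thesis using lam by (simp add: measure_def)
qed

sublocale shifted_mixture Q poisson_weight "gamma * Delta"
proof (rule shifted_mixture.intro)
  have "summable (\<lambda>k. exp (- lam * Delta) * ((Delta * lam) ^ k / fact k))"
    by (intro summable_mult summable_exp_series)
  then show "summable (\<lambda>k. poisson_weight k * measure (Q k) UNIV)"
    by (simp add: poisson_weight_def measure_Q_UNIV power_mult_distrib field_simps)
qed (use Delta finite_Q in \<open>simp_all add: poisson_weight_def\<close>)

lemma lawP_eq_mixture: "lawP Delta gamma lam nu = mixture"
  unfolding lawP_def mixture_def poisson_weight_def ..

lemma convM_eq_conv_Q:
  assumes "f \<in> borel_measurable borel"
  shows "convM Delta gamma lam nu f x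
    = exp (lam * Delta) * (\<Sum>k. (- Delta) ^ k / fact k * conv_Q f k (x - gamma * Delta))"
  using assms unfolding convM_def conv_Q_def conv_pow_reflect_measure[OF finite_nu sets_nu]
  by (simp add: integral_distr)

lemma abs_conv_Q_le:
  assumes "f \<in> borel_measurable borel" "\<And>x. \<bar>f x\<bar> \<le> B"
  shows "\<bar>conv_Q f k x\<bar> \<le> B * lam ^ k"
  using finite_measure.abs_integral_le_bound[OF finite_Q, where f="\<lambda>y. f (x + y)" and B=B] assms
  by (simp add: conv_Q_def measure_Q_UNIV)

lemma measurable_conv_Q [measurable]:
  assumes [measurable]: "f \<in> borel_measurable borel"
  shows "conv_Q f k \<in> borel_measurable borel"
proof -
  interpret finite_measure "Q k" by (rule finite_Q)
  show ?thesis
    unfolding conv_Q_def[abs_def] by (rule borel_measurable_lebesgue_integral) measurable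
qed

lemma convM_term_bound:
  assumes "f \<in> borel_measurable borel" "\<And>x. \<bar>f x\<bar> \<le> B"
  shows "\<bar>(- Delta) ^ k / fact k * conv_Q f k x\<bar> \<le> B * ((Delta * lam) ^ k / fact k)"
proof -
  have "\<bar>(- Delta) ^ k / fact k * conv_Q f k x\<bar> = Delta ^ k / fact k * \<bar>conv_Q f k x\<bar>"
    using Delta by (simp add: abs_mult power_abs)
  also have "\<dots> \<le> Delta ^ k / fact k * (B * lam ^ k)"
    using abs_conv_Q_le[OF assms] Delta by (intro mult_left_mono) auto
  finally show ?thesis by (simp add: power_mult_distrib field_simps)
qed

lemma summable_convM_series:
  assumes "f \<in> borel_measurable borel" "\<And>x. \<bar>f x\<bar> \<le> B"
  shows "summable (\<lambda>k. (- Delta) ^ k / fact k * conv_Q f k x)"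
  by (rule summable_comparison_test[OF _ summable_mult[OF summable_exp_series]])
    (use convM_term_bound[OF assms] in auto)

lemma abs_convM_le:
  assumes "f \<in> borel_measurable borel" "\<And>x. \<bar>f x\<bar> \<le> B"
  shows "\<bar>convM Delta gamma lam nu f x\<bar> \<le> B * exp (2 * lam * Delta)"
proof -
  have "\<bar>\<Sum>k. (- Delta) ^ k / fact k * conv_Q f k (x - gamma * Delta)\<bar>
      \<le> (\<Sum>k. B * ((Delta * lam) ^ k / fact k))"
    using norm_suminf_le[of "\<lambda>k. (- Delta) ^ k / fact k * conv_Q f k (x - gamma * Delta)"
        "\<lambda>k. B * ((Delta * lam) ^ k / fact k)"] convM_term_bound[OF assms]
      summable_mult[OF summable_exp_series]
    by simp
  also have "\<dots> = B * (\<Sum>k. (Delta * lam) ^ k / fact k)"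
    by (rule suminf_mult[OF summable_exp_series])
  also have "\<dots> = B * exp (Delta * lam)"
    using exp_series_sums by (simp add: sums_iff)
  finally have "exp (lam * Delta) * \<bar>\<Sum>k. (- Delta) ^ k / fact k * conv_Q f k (x - gamma * Delta)\<bar>
      \<le> exp (lam * Delta) * (B * exp (lam * Delta))"
    by (simp add: mult.commute)
  also have "\<dots> = B * exp (2 * lam * Delta)"
    by (simp add: mult_exp_exp)
  finally show ?thesis
    unfolding convM_eq_conv_Q[OF assms(1)] by (simp add: abs_mult)
qed

lemma measurable_convM [measurable]:
  assumes "f \<in> borel_measurable borel" "\<And>x. \<bar>f x\<bar> \<le> B"
  shows "convM Delta gamma lam nu f \<in> borel_measurable borel"
proof (rule borel_measurable_LIMSEQ_real)
  show "(\<lambda>n. exp (lam * Delta) * (\<Sum>k<n. (- Delta) ^ k / fact k * conv_Q f k (x - gamma * Delta)))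
      \<longlonglongrightarrow> convM Delta gamma lam nu f x" for x
    unfolding convM_eq_conv_Q[OF assms(1)]
    by (intro tendsto_mult_left summable_LIMSEQ summable_convM_series[OF assms])
qed (use assms(1) in measurable)

lemma convM_tendsto:
  assumes [measurable]: "\<And>n. f n \<in> borel_measurable borel" "g \<in> borel_measurable borel"
    and bound: "\<And>n x. \<bar>f n x\<bar> \<le> B" and lim: "\<And>x. (\<lambda>n. f n x) \<longlonglongrightarrow> g x"
  shows "(\<lambda>n. convM Delta gamma lam nu (f n) x) \<longlonglongrightarrow> convM Delta gamma lam nu g x"
proof -
  have conv_Q_tendsto: "(\<lambda>n. conv_Q (f n) k y) \<longlonglongrightarrow> conv_Q g k y" for k y
    unfolding conv_Q_def
    by (rule integral_dominated_convergence[where w="\<lambda>_. B"])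
      (use bound lim finite_measure.integrable_const[OF finite_Q] in auto)
  have "(\<lambda>n. \<Sum>k. (- Delta) ^ k / fact k * conv_Q (f n) k (x - gamma * Delta))
      \<longlonglongrightarrow> (\<Sum>k. (- Delta) ^ k / fact k * conv_Q g k (x - gamma * Delta))"
  proof (rule tannerys_theorem[where M="\<lambda>k. B * ((Delta * lam) ^ k / fact k)", THEN conjunct2, THEN conjunct2])
    show "\<forall>\<^sub>F (k, n) in at_top \<times>\<^sub>F sequentially.
        norm ((- Delta) ^ k / fact k * conv_Q (f n) k (x - gamma * Delta)) \<le> B * ((Delta * lam) ^ k / fact k)"
      using convM_term_bound[OF _ bound] by (intro always_eventually) auto
    show "(\<lambda>n. (- Delta) ^ k / fact k * conv_Q (f n) k (x - gamma * Delta))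
        \<longlonglongrightarrow> (- Delta) ^ k / fact k * conv_Q g k (x - gamma * Delta)" for k
      by (intro tendsto_mult_left conv_Q_tendsto)
  qed (use summable_mult[OF summable_exp_series] in auto)
  then show ?thesis
    unfolding convM_eq_conv_Q[OF assms(1)] convM_eq_conv_Q[OF assms(2)] by (rule tendsto_mult_left)
qed

lemma integral_conv_Q:
  assumes "f \<in> borel_measurable borel" "\<And>x. \<bar>f x\<bar> \<le> B"
  shows "(\<integral>z. conv_Q f k z \<partial>Q l) = (\<integral>y. f y \<partial>Q (l + k))"
  using integral_convolution[OF finite_Q sets_conv_pow finite_Q sets_conv_pow assms, of l k]
  by (simp add: conv_Q_def conv_pow_add[OF finite_nu sets_nu])

lemma integral_convM_Q:
  assumes f: "f \<in> borel_measurable borel" and B: "\<And>x. \<bar>f x\<bar> \<le> B"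
  shows "(\<integral>z. convM Delta gamma lam nu f (gamma * Delta + z) \<partial>Q l)
    = exp (lam * Delta) * (\<Sum>k. (- Delta) ^ k / fact k * (\<integral>y. f y \<partial>Q (l + k)))"
proof -
  define u where "u k z = (- Delta) ^ k / fact k * conv_Q f k z" for k z
  have u_bound: "\<bar>u k z\<bar> \<le> B * ((Delta * lam) ^ k / fact k)" for k z
    unfolding u_def by (rule convM_term_bound[OF f B])
  have u_measurable: "u k \<in> borel_measurable (Q l)" for k
    unfolding u_def using f by measurable
  have u_integrable: "integrable (Q l) (u k)" for k
    by (rule finite_measure.integrable_bounded[OF finite_Q u_measurable u_bound])
  have "(\<lambda>k. \<integral>z. u k z \<partial>Q l) sums (\<integral>z. (\<Sum>k. u k z) \<partial>Q l)"
  proof (rule sums_integral[OF u_integrable])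
    show "AE z in Q l. summable (\<lambda>k. norm (u k z))"
      by (intro AE_I2 summable_comparison_test[OF _ summable_mult[OF summable_exp_series]])
        (use u_bound in auto)
    have "\<bar>\<integral>z. norm (u k z) \<partial>Q l\<bar> \<le> B * ((Delta * lam) ^ k / fact k) * lam ^ l" for k
      using finite_measure.abs_integral_le_bound[OF finite_Q,
          of "\<lambda>z. norm (u k z)" l "B * ((Delta * lam) ^ k / fact k)"] u_bound u_measurable
      by (simp add: measure_Q_UNIV)
    then show "summable (\<lambda>k. \<integral>z. norm (u k z) \<partial>Q l)"
      by (intro summable_comparison_test[OF _ summable_mult2[OF summable_mult[OF summable_exp_series]]])
        auto
  qed
  moreover have "convM Delta gamma lam nu f (gamma * Delta + z) = exp (lam * Delta) * (\<Sum>k. u k z)" for z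
    using convM_eq_conv_Q[OF f] by (simp add: u_def)
  moreover have "(\<integral>z. u k z \<partial>Q l) = (- Delta) ^ k / fact k * (\<integral>y. f y \<partial>Q (l + k))" for k
    using integral_conv_Q[OF f B] by (simp add: u_def)
  ultimately show ?thesis
    by (simp add: sums_iff)
qed

lemma integral_convM_lawP:
  assumes f: "f \<in> borel_measurable borel" and B: "\<And>x. \<bar>f x\<bar> \<le> B"
  shows "(\<integral>x. convM Delta gamma lam nu f x \<partial>lawP Delta gamma lam nu) = f 0"
proof -
  define a where "a m = (\<integral>y. f y \<partial>Q m)" for m
  have a_bound: "\<bar>a m\<bar> \<le> B * lam ^ m" for m
    using abs_conv_Q_le[OF f B, of m 0] by (simp add: a_def conv_Q_def)
  have "(\<integral>x. convM Delta gamma lam nu f x \<partial>lawP Delta gamma lam nu)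
      = (\<Sum>l. poisson_weight l * (\<integral>z. convM Delta gamma lam nu f (gamma * Delta + z) \<partial>Q l))"
    unfolding lawP_eq_mixture
    by (rule integral_mixture(2)[OF measurable_convM[OF f B] abs_convM_le[OF f B]])
  also have "\<dots> = (\<Sum>l. Delta ^ l / fact l * (\<Sum>k. (- Delta) ^ k / fact k * a (l + k)))"
  proof -
    have "poisson_weight l * exp (lam * Delta) = Delta ^ l / fact l" for l
      by (simp add: poisson_weight_def exp_minus field_simps)
    then show ?thesis
      by (simp add: integral_convM_Q[OF f B] a_def flip: mult.assoc)
  qed
  also have "\<dots> = a 0"
    using Delta lam a_bound by (intro exp_weights_inversion[where L=lam and B=B]) auto
  also have "\<dots> = f 0"
    using f by (simp add: a_def integral_return)
  finally show ?thesis .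
qed

lemma integral_convM_mult_tendsto:
  assumes f1: "\<And>n. f1 n \<in> borel_measurable borel" "g1 \<in> borel_measurable borel"
      "\<And>n x. \<bar>f1 n x\<bar> \<le> B1" "\<And>x. \<bar>g1 x\<bar> \<le> B1" "\<And>x. (\<lambda>n. f1 n x) \<longlonglongrightarrow> g1 x"
    and f2: "\<And>n. f2 n \<in> borel_measurable borel" "g2 \<in> borel_measurable borel"
      "\<And>n x. \<bar>f2 n x\<bar> \<le> B2" "\<And>x. \<bar>g2 x\<bar> \<le> B2" "\<And>x. (\<lambda>n. f2 n x) \<longlonglongrightarrow> g2 x"
  shows "(\<lambda>n. \<integral>x. convM Delta gamma lam nu (f1 n) x * convM Delta gamma lam nu (f2 n) x
        \<partial>lawP Delta gamma lam nu)
    \<longlonglongrightarrow> (\<integral>x. convM Delta gamma lam nu g1 x * convM Delta gamma lam nu g2 x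
        \<partial>lawP Delta gamma lam nu)"
  unfolding lawP_eq_mixture
proof (rule integral_dominated_convergence[where w="\<lambda>_. B1 * exp (2 * lam * Delta) * (B2 * exp (2 * lam * Delta))"])
  show "AE x in mixture. (\<lambda>n. convM Delta gamma lam nu (f1 n) x * convM Delta gamma lam nu (f2 n) x)
      \<longlonglongrightarrow> convM Delta gamma lam nu g1 x * convM Delta gamma lam nu g2 x"
    using f1 f2 by (intro AE_I2 tendsto_mult convM_tendsto) auto
  show "AE x in mixture. norm (convM Delta gamma lam nu (f1 n) x * convM Delta gamma lam nu (f2 n) x)
      \<le> B1 * exp (2 * lam * Delta) * (B2 * exp (2 * lam * Delta))" for n
    using abs_convM_le[OF f1(1,3)] abs_convM_le[OF f2(1,3)]
    by (intro AE_I2) (simp add: abs_mult mult_mono')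
  show "integrable mixture (\<lambda>_. B1 * exp (2 * lam * Delta) * (B2 * exp (2 * lam * Delta)))"
    by (rule finite_measure.integrable_const[OF finite_measure_mixture])
qed (use f1 f2 in simp_all)

context
  fixes q :: "int \<Rightarrow> real" and nu_ac :: "real measure"
  assumes sets_nu_ac: "sets nu_ac = sets borel" and ac: "absolutely_continuous lborel nu_ac"
    and nu_decomp: "\<forall>A \<in> sets borel. emeasure nu A =
      (\<integral>\<^sup>+ j. ennreal (q j) * indicator A (real_of_int j) \<partial>count_space (UNIV - {0})) + emeasure nu_ac A"
begin

lemma emeasure_nu_null:
  assumes S: "S \<in> null_sets lborel" and SZ: "S \<inter> \<int> = {}"
  shows "emeasure nu S = 0"
proof -
  have "S \<in> sets borel" using S by auto
  moreover have "emeasure nu_ac S = 0"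
    using ac S sets_nu_ac unfolding absolutely_continuous_def by auto
  moreover have "indicator S (real_of_int j) = (0 :: ennreal)" for j
    using SZ by (auto simp: indicator_def)
  ultimately show ?thesis
    using nu_decomp by simp
qed

lemma emeasure_conv_pow_null:
  "N \<in> null_sets lborel \<Longrightarrow> N \<inter> \<int> = {} \<Longrightarrow> emeasure (Q m) N = 0"
proof (induction m arbitrary: N)
  case 0
  then have "N \<in> sets borel" "0 \<notin> N" by auto
  then show ?case by (simp add: emeasure_return)
next
  case (Suc m)
  define psi where "psi x = (\<integral>\<^sup>+y. indicator N (x + y) \<partial>Q m)" for x
  have N_sets: "N \<in> sets borel" using Suc by auto
  have psi_measurable: "psi \<in> borel_measurable borel"
    unfolding psi_def by (rule measurable_translate_indicator_integral[OF finite_Q sets_conv_pow N_sets])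
  have psi_int: "psi j = 0" if "j \<in> \<int>" for j
  proof -
    have null: "{y. y + j \<in> N} \<in> null_sets lborel"
      using null_sets_translation[OF Suc.prems(1), of "- j"] by simp
    then have "{y. y + j \<in> N} \<in> sets (Q m)" by auto
    moreover note null
    moreover have "{y. y + j \<in> N} \<inter> \<int> = {}"
      using Suc.prems(2) that by auto
    moreover have "(\<lambda>y. indicator N (j + y) :: ennreal) = indicator {y. y + j \<in> N}"
      by (auto simp: indicator_def add.commute)
    ultimately show ?thesis
      using Suc.IH by (simp add: psi_def)
  qed
  txt \<open>\<open>psi\<close> vanishes Lebesgue-a.e. and on \<open>\<int>\<close>, hence \<open>\<nu>\<close>-a.e.\<close>
  let ?S = "{x. psi x \<noteq> 0}"
  have S_sets: "?S \<in> sets borel" using psi_measurable by measurable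
  have "AE x in lborel. psi x = 0"
    unfolding psi_def by (rule AE_lborel_translate_null[OF finite_Q sets_conv_pow Suc.prems(1)])
  then have "?S \<in> null_sets lborel"
    using S_sets by (simp add: AE_iff_null)
  then have "emeasure nu ?S = 0"
    using psi_int by (intro emeasure_nu_null) auto
  then have "AE x in nu. psi x = 0"
    using S_sets by (subst AE_iff_measurable[where N="?S"]) (auto simp: sets_nu sets_eq_imp_space_eq[OF sets_nu])
  then have "(\<integral>\<^sup>+x. psi x \<partial>nu) = 0"
    using psi_measurable by (subst nn_integral_0_iff_AE) (auto simp: measurable_cong_sets[OF sets_nu refl])
  moreover have "emeasure (Q (Suc m)) N = (\<integral>\<^sup>+x. psi x \<partial>nu)"
    unfolding psi_def using finite_nu sets_nu finite_Q N_sets by (simp add: convolution_emeasure')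
  ultimately show ?case by simp
qed

lemma conv_Q_cong_translate_null:
  assumes f: "f \<in> borel_measurable borel" and g: "g \<in> borel_measurable borel" and N: "N \<in> sets borel"
    and null: "(\<integral>\<^sup>+w. indicator N (z + w) \<partial>Q k) = 0" and eq: "\<And>x. x \<notin> N \<Longrightarrow> f x = g x"
  shows "conv_Q f k z = conv_Q g k z"
proof -
  have "AE w in Q k. indicator N (z + w) = (0 :: ennreal)"
    using null N by (subst nn_integral_0_iff_AE[symmetric]) auto
  then have "AE w in Q k. f (z + w) = g (z + w)"
    by eventually_elim (auto simp: indicator_def eq)
  then show ?thesis
    unfolding conv_Q_def using f g by (intro integral_cong_AE) auto
qed

lemma AE_convM_eq:
  assumes f: "f \<in> borel_measurable borel" "\<And>x. \<bar>f x\<bar> \<le> Bf"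
    and g: "g \<in> borel_measurable borel" "\<And>x. \<bar>g x\<bar> \<le> Bg"
    and N: "N \<in> null_sets lborel" "N \<inter> \<int> = {}" and eq: "\<And>x. x \<notin> N \<Longrightarrow> f x = g x"
  shows "AE x in lawP Delta gamma lam nu. convM Delta gamma lam nu f x = convM Delta gamma lam nu g x"
  unfolding lawP_eq_mixture
proof (rule AE_mixtureI)
  have N_sets: "N \<in> sets borel" using N by auto
  show "{x. convM Delta gamma lam nu f x \<noteq> convM Delta gamma lam nu g x} \<in> sets borel"
    using measurable_convM[OF f] measurable_convM[OF g] by measurable
  fix l
  have "AE z in Q l. (\<integral>\<^sup>+w. indicator N (z + w) \<partial>Q k) = 0" for k
  proof -
    have "(\<integral>\<^sup>+z. \<integral>\<^sup>+w. indicator N (z + w) \<partial>Q k \<partial>Q l) = emeasure (Q (l + k)) N"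
      using N_sets by (simp add: convolution_emeasure' finite_Q conv_pow_add[OF finite_nu sets_nu, symmetric])
    also have "\<dots> = 0"
      by (rule emeasure_conv_pow_null[OF N])
    finally show ?thesis
      using measurable_translate_indicator_integral[OF finite_Q sets_conv_pow N_sets]
      by (subst nn_integral_0_iff_AE[symmetric]) auto
  qed
  then have "AE z in Q l. \<forall>k. (\<integral>\<^sup>+w. indicator N (z + w) \<partial>Q k) = 0"
    by (simp add: AE_all_countable)
  then show "AE z in Q l. convM Delta gamma lam nu f (gamma * Delta + z) = convM Delta gamma lam nu g (gamma * Delta + z)"
    by eventually_elim
      (simp add: convM_eq_conv_Q f(1) g(1) conv_Q_cong_translate_null[OF f(1) g(1) N_sets _ eq])
qed

lemma integral_convM_mult_cong:
  assumes f1: "f1 \<in> borel_measurable borel" "\<And>x. \<bar>f1 x\<bar> \<le> B1"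
    and g1: "g1 \<in> borel_measurable borel" "\<And>x. \<bar>g1 x\<bar> \<le> B1'"
    and f2: "f2 \<in> borel_measurable borel" "\<And>x. \<bar>f2 x\<bar> \<le> B2"
    and g2: "g2 \<in> borel_measurable borel" "\<And>x. \<bar>g2 x\<bar> \<le> B2'"
    and N1: "N1 \<in> null_sets lborel" "N1 \<inter> \<int> = {}" "\<And>x. x \<notin> N1 \<Longrightarrow> f1 x = g1 x"
    and N2: "N2 \<in> null_sets lborel" "N2 \<inter> \<int> = {}" "\<And>x. x \<notin> N2 \<Longrightarrow> f2 x = g2 x"
  shows "(\<integral>x. convM Delta gamma lam nu f1 x * convM Delta gamma lam nu f2 x \<partial>lawP Delta gamma lam nu)
    = (\<integral>x. convM Delta gamma lam nu g1 x * convM Delta gamma lam nu g2 x \<partial>lawP Delta gamma lam nu)"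
proof (rule integral_cong_AE)
  have "AE x in lawP Delta gamma lam nu. convM Delta gamma lam nu f1 x = convM Delta gamma lam nu g1 x"
    by (rule AE_convM_eq[OF f1 g1 N1])
  moreover have "AE x in lawP Delta gamma lam nu. convM Delta gamma lam nu f2 x = convM Delta gamma lam nu g2 x"
    by (rule AE_convM_eq[OF f2 g2 N2])
  ultimately show "AE x in lawP Delta gamma lam nu.
      convM Delta gamma lam nu f1 x * convM Delta gamma lam nu f2 x
      = convM Delta gamma lam nu g1 x * convM Delta gamma lam nu g2 x"
    by eventually_elim simp
qed (use measurable_convM[OF f1] measurable_convM[OF f2] measurable_convM[OF g1] measurable_convM[OF g2]
  in \<open>simp_all add: lawP_eq_mixture\<close>)

end

end

section \<open>Smoothing kernels\<close>

lemma Kh_eq_affine: "Kh K h = (\<lambda>y. (1 / h) * K (0 + (1 / h) * y))"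
  by (auto simp: Kh_def fun_eq_iff)

lemma integrable_Kh:
  assumes "integrable lborel K" "h > 0"
  shows "integrable lborel (Kh K h)"
  unfolding Kh_eq_affine
  using lborel_integrable_real_affine[OF assms(1), of "1 / h" 0] assms(2) by (intro integrable_mult_right) auto

lemma integral_abs_Kh:
  assumes "h > 0"
  shows "(\<integral>y. \<bar>Kh K h y\<bar> \<partial>lborel) = (\<integral>y. \<bar>K y\<bar> \<partial>lborel)"
proof -
  have "(\<integral>y. \<bar>K y\<bar> \<partial>lborel) = \<bar>1 / h\<bar> *\<^sub>R (\<integral>y. \<bar>K (0 + (1 / h) * y)\<bar> \<partial>lborel)"
    using assms by (intro lborel_integral_real_affine) auto
  also have "\<dots> = (\<integral>y. \<bar>Kh K h y\<bar> \<partial>lborel)"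
    using assms by (simp add: Kh_def abs_divide)
  finally show ?thesis by simp
qed

lemma measurable_convfun:
  assumes [measurable]: "f \<in> borel_measurable borel" "g \<in> borel_measurable borel"
  shows "convfun f g \<in> borel_measurable borel"
proof -
  have sets_pair: "sets (borel \<Otimes>\<^sub>M lborel) = sets (borel \<Otimes>\<^sub>M borel)"
    by (rule sets_pair_measure_cong) simp_all
  have "(\<lambda>(x, y). f (x - y) * g y) \<in> borel_measurable (borel \<Otimes>\<^sub>M lborel)"
    unfolding measurable_cong_sets[OF sets_pair refl] by measurable
  then show ?thesis
    unfolding convfun_def[abs_def] by (rule lborel.borel_measurable_lebesgue_integral)
qed

lemma abs_convfun_le:
  assumes g: "g \<in> borel_measurable borel" "\<And>x. \<bar>g x\<bar> \<le> C" and k: "integrable lborel k"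
  shows "\<bar>convfun g k x\<bar> \<le> C * (\<integral>y. \<bar>k y\<bar> \<partial>lborel)"
proof -
  have C: "C \<ge> 0" using g(2)[of 0] by simp
  have bound: "\<bar>g (x - y) * k y\<bar> \<le> C * \<bar>k y\<bar>" for y
    using g(2) by (simp add: abs_mult mult_right_mono)
  have [measurable]: "k \<in> borel_measurable borel"
    using borel_measurable_integrable[OF k] by simp
  have kC: "integrable lborel (\<lambda>y. C * \<bar>k y\<bar>)"
    using k by (intro integrable_mult_right integrable_abs)
  have "integrable lborel (\<lambda>y. g (x - y) * k y)"
    using g(1) by (intro Bochner_Integration.integrable_bound[OF kC] AE_I2) (use bound C in \<open>auto simp: abs_mult\<close>)
  then have "\<bar>convfun g k x\<bar> \<le> (\<integral>y. C * \<bar>k y\<bar> \<partial>lborel)"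
    unfolding convfun_def using kC bound by (intro integral_abs_bound_integral) auto
  then show ?thesis by simp
qed

lemma ereal_limit_bounded:
  fixes f :: "nat \<Rightarrow> real"
  assumes lim: "(\<lambda>n. ereal (f n)) \<longlonglongrightarrow> G" and B: "\<And>n. \<bar>f n\<bar> \<le> B"
  shows "\<bar>G\<bar> \<noteq> \<infinity>" and "f \<longlonglongrightarrow> real_of_ereal G" and "\<bar>real_of_ereal G\<bar> \<le> B"
proof -
  have "ereal (- B) \<le> ereal (f n)" "ereal (f n) \<le> ereal B" for n
    using B[of n] by auto
  then have "ereal (- B) \<le> G" "G \<le> ereal B"
    by (intro LIMSEQ_le_const[OF lim] LIMSEQ_le_const2[OF lim] exI[of _ 0]; simp)+
  then show "\<bar>G\<bar> \<noteq> \<infinity>" and "\<bar>real_of_ereal G\<bar> \<le> B"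
    by (cases G; auto)+
  then show "f \<longlonglongrightarrow> real_of_ereal G"
    using lim by (metis lim_ereal ereal_real')
qed

lemma smoothed_limit:
  fixes g :: "nat \<Rightarrow> real \<Rightarrow> real" and G :: "real \<Rightarrow> ereal"
  assumes K: "K \<in> borel_measurable borel" "integrable lborel K" and h: "\<And>n. h n > 0"
    and g: "\<And>n. g n \<in> borel_measurable borel" "\<And>n x. \<bar>g n x\<bar> \<le> C"
    and lim: "\<And>x. (\<lambda>n. ereal (convfun (g n) (Kh K (h n)) x)) \<longlonglongrightarrow> G x"
  defines "B \<equiv> C * (\<integral>y. \<bar>K y\<bar> \<partial>lborel)"
  shows "\<And>n. convfun (g n) (Kh K (h n)) \<in> borel_measurable borel"
    and "\<And>n x. \<bar>convfun (g n) (Kh K (h n)) x\<bar> \<le> B"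
    and "\<And>x. \<bar>G x\<bar> \<noteq> \<infinity>"
    and "\<And>x. (\<lambda>n. convfun (g n) (Kh K (h n)) x) \<longlonglongrightarrow> real_of_ereal (G x)"
    and "\<And>x. \<bar>real_of_ereal (G x)\<bar> \<le> B"
    and "(\<lambda>x. real_of_ereal (G x)) \<in> borel_measurable borel"
proof -
  have "Kh K (h n) \<in> borel_measurable borel" for n
    using K(1) unfolding Kh_def by measurable
  then show meas: "convfun (g n) (Kh K (h n)) \<in> borel_measurable borel" for n
    by (intro measurable_convfun g(1))
  show bound: "\<bar>convfun (g n) (Kh K (h n)) x\<bar> \<le> B" for n x
    using abs_convfun_le[OF g(1,2) integrable_Kh[OF K(2) h]] by (simp add: B_def integral_abs_Kh[OF h])
  note limit = ereal_limit_bounded[OF lim bound]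
  show "\<bar>G x\<bar> \<noteq> \<infinity>" "\<bar>real_of_ereal (G x)\<bar> \<le> B" for x
    by (fact limit(1), fact limit(3))
  show tendsto: "(\<lambda>n. convfun (g n) (Kh K (h n)) x) \<longlonglongrightarrow> real_of_ereal (G x)" for x
    by (fact limit(2))
  show "(\<lambda>x. real_of_ereal (G x)) \<in> borel_measurable borel"
    by (rule borel_measurable_LIMSEQ_real[OF tendsto meas])
qed

theorem lemma3p4:
  fixes Delta gamma lam :: real and nu :: "real measure"
    and K :: "real \<Rightarrow> real" and h :: "nat \<Rightarrow> real"
    and g1 g2 :: "nat \<Rightarrow> real \<Rightarrow> real" and G1 G2 :: "real \<Rightarrow> ereal"
  assumes Delta: "Delta > 0" and lam: "lam > 0"
    and nu_fin: "finite_measure nu" and nu_sets: "sets nu = sets borel"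
    and nu_mass: "measure nu UNIV = lam"
    and K_sym: "\<And>x. K (- x) = K x"
    and K_meas: "K \<in> borel_measurable borel" and K_int: "integrable lborel K"
    and K_supp: "closure {u. fourier K u \<noteq> 0} \<subseteq> {-1..1}"
    and h_pos: "\<And>n. h n > 0" and h_lim: "h \<longlonglongrightarrow> 0"
    and g1_meas: "\<And>n. g1 n \<in> borel_measurable borel"
    and g2_meas: "\<And>n. g2 n \<in> borel_measurable borel"
    and g1_L2: "\<And>n. integrable lborel (\<lambda>x. (g1 n x)\<^sup>2)"
    and g2_L2: "\<And>n. integrable lborel (\<lambda>x. (g2 n x)\<^sup>2)"
    and g1_bdd: "\<exists>C. \<forall>n x. \<bar>g1 n x\<bar> \<le> C"
    and g2_bdd: "\<exists>C. \<forall>n x. \<bar>g2 n x\<bar> \<le> C"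
    and G1_lim: "\<And>x. (\<lambda>n. ereal (convfun (g1 n) (Kh K (h n)) x)) \<longlonglongrightarrow> G1 x"
    and G2_lim: "\<And>x. (\<lambda>n. ereal (convfun (g2 n) (Kh K (h n)) x)) \<longlonglongrightarrow> G2 x"
  shows
    "(\<forall>x. \<bar>G1 x\<bar> \<noteq> \<infinity>) \<and> (\<forall>x. \<bar>G2 x\<bar> \<noteq> \<infinity>)
     \<and> (\<lambda>n. \<integral>x. convM Delta gamma lam nu (convfun (g1 n) (Kh K (h n))) x
                 * convM Delta gamma lam nu (convfun (g2 n) (Kh K (h n))) x \<partial>lawP Delta gamma lam nu)
        \<longlonglongrightarrow> (\<integral>x. convM Delta gamma lam nu (\<lambda>y. real_of_ereal (G1 y)) x
                 * convM Delta gamma lam nu (\<lambda>y. real_of_ereal (G2 y)) x \<partial>lawP Delta gamma lam nu)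
     \<and> (\<lambda>n. \<integral>x. convM Delta gamma lam nu (convfun (g1 n) (Kh K (h n))) x \<partial>lawP Delta gamma lam nu)
        \<longlonglongrightarrow> real_of_ereal (G1 0)
     \<and> (\<lambda>n. convfun (g1 n) (Kh K (h n)) 0) \<longlonglongrightarrow> real_of_ereal (G1 0)
     \<and> (\<lambda>n. \<integral>x. convM Delta gamma lam nu (convfun (g2 n) (Kh K (h n))) x \<partial>lawP Delta gamma lam nu)
        \<longlonglongrightarrow> real_of_ereal (G2 0)
     \<and> (\<lambda>n. convfun (g2 n) (Kh K (h n)) 0) \<longlonglongrightarrow> real_of_ereal (G2 0)
     \<and> (\<forall>(q :: int \<Rightarrow> real) (nu_ac :: real measure) (gt1 :: real \<Rightarrow> real) (gt2 :: real \<Rightarrow> real)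
          (N1 :: real set) (N2 :: real set).
          (\<forall>j. q j \<ge> 0) \<longrightarrow> sets nu_ac = sets borel \<longrightarrow> absolutely_continuous lborel nu_ac \<longrightarrow>
          (\<forall>A \<in> sets borel. emeasure nu A =
              (\<integral>\<^sup>+ j. ennreal (q j) * indicator A (real_of_int j) \<partial>count_space (UNIV - {0}))
              + emeasure nu_ac A) \<longrightarrow>
          gt1 \<in> borel_measurable borel \<longrightarrow> gt2 \<in> borel_measurable borel \<longrightarrow>
          (\<exists>C. \<forall>x. \<bar>gt1 x\<bar> \<le> C) \<longrightarrow> (\<exists>C. \<forall>x. \<bar>gt2 x\<bar> \<le> C) \<longrightarrow>
          N1 \<in> null_sets lborel \<longrightarrow> N2 \<in> null_sets lborel \<longrightarrow>
          N1 \<inter> \<int> = {} \<longrightarrow> N2 \<inter> \<int> = {} \<longrightarrow>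
          (\<forall>x. x \<notin> N1 \<longrightarrow> gt1 x = real_of_ereal (G1 x)) \<longrightarrow>
          (\<forall>x. x \<notin> N2 \<longrightarrow> gt2 x = real_of_ereal (G2 x)) \<longrightarrow>
          (\<integral>x. convM Delta gamma lam nu gt1 x * convM Delta gamma lam nu gt2 x \<partial>lawP Delta gamma lam nu)
          = (\<integral>x. convM Delta gamma lam nu (\<lambda>y. real_of_ereal (G1 y)) x
                 * convM Delta gamma lam nu (\<lambda>y. real_of_ereal (G2 y)) x \<partial>lawP Delta gamma lam nu))"
proof -
  obtain C1 C2 where C1: "\<And>n x. \<bar>g1 n x\<bar> \<le> C1" and C2: "\<And>n x. \<bar>g2 n x\<bar> \<le> C2"
    using g1_bdd g2_bdd by blast
  note S1 = smoothed_limit[OF K_meas K_int h_pos g1_meas C1 G1_lim]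
    and S2 = smoothed_limit[OF K_meas K_int h_pos g2_meas C2 G2_lim]
  interpret compound_poisson Delta gamma lam nu
    by (rule compound_poisson.intro) fact+
  show ?thesis
  proof (intro conjI allI impI, goal_cases)
    case (8 q nu_ac gt1 gt2 N1 N2)
    then obtain D1 D2 where D: "\<And>x. \<bar>gt1 x\<bar> \<le> D1" "\<And>x. \<bar>gt2 x\<bar> \<le> D2"
      by blast
    show ?case
      by (rule integral_convM_mult_cong[OF 8(2-5) D(1) S1(6,5) 8(6) D(2) S2(6,5)
            8(9,11) 8(13)[rule_format] 8(10,12) 8(14)[rule_format]])
  qed (use S1 S2 integral_convM_mult_tendsto[OF S1(1,6,2,5,4) S2(1,6,2,5,4)]
      in \<open>simp_all add: integral_convM_lawP[OF S1(1,2)] integral_convM_lawP[OF S2(1,2)]\<close>)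
qed


end
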